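(* Let $\mathcal{C}_0$ be a linear code of length $\ell$ over $\mathbb{F}_q$, let $R\subseteq[1,\ell]$ with $|R|=r$, and let $\overline{\mathcal{C}_0}$ be the code obtained by puncturing $\mathcal{C}_0$ on the positions in $R$ (deleting those coordinates). Let $X=\mathbb{F}_q\times[1,\ell]$ and $\overline{X}=\mathbb{F}_q\times([1,\ell]\setminus R)$. Then for every prime power $q'$, $$\mathrm{IC}_{q'}(\overline{\mathcal{C}_0})=\{\bar c\in\mathbb{F}_{q'}^{\overline{X}}:\ \mathrm{ext}(\bar c)\in\mathrm{IC}_{q'}(\mathcal{C}_0)\},$$ where $\mathrm{ext}(\bar c)\in\mathbb{F}_{q'}^X$ agrees with $\bar c$ on $\overline{X}$ and is $0$ on $X\setminus\overline{X}$; i.e. $\mathrm{IC}_{q'}(\overline{\mathcal{C}_0})$ is the shortening of $\mathrm{IC}_{q'}(\mathcal{C}_0)$ on $X\setminus\overline X$, which is the union of the $r$ groups $\mathbb{F}_q\times\{i\}$, $i\in R$.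
   Context: For a code $\mathcal{C}_0\subseteq S^{I}$ over a finite set $S$ with coordinates indexed by a finite set $I$, its incidence code over $\mathbb{F}_{q'}$ is $\mathrm{IC}_{q'}(\mathcal{C}_0)=\{u\in\mathbb{F}_{q'}^{S\times I}:\ \sum_{i\in I}u_{(c_i,i)}=0\ \text{for all } c\in\mathcal{C}_0\}$ (the code whose parity checks are the incidence vectors of the blocks $\{(c_i,i):i\in I\}$, $c\in\mathcal{C}_0$). *)

theory Defs
  imports Main
begin

definition words :: "'i set \<Rightarrow> ('i \<Rightarrow> 'a::zero) set" where
  "words J = {c. \<forall>i. i \<notin> J \<longrightarrow> c i = 0}"

definition linear_code :: "'i set \<Rightarrow> ('i \<Rightarrow> 'a::field) set \<Rightarrow> bool" where
  "linear_code J C \<longleftrightarrow> C \<subseteq> words J \<and> (\<lambda>_. 0) \<in> C \<and>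
     (\<forall>c\<in>C. \<forall>d\<in>C. (\<lambda>i. c i + d i) \<in> C) \<and>
     (\<forall>a. \<forall>c\<in>C. (\<lambda>i. a * c i) \<in> C)"

text \<open>Puncturing on R: delete the coordinates in R (the result is a code
  indexed by J - R).\<close>
definition puncture :: "'i set \<Rightarrow> ('i \<Rightarrow> 'a::zero) set \<Rightarrow> ('i \<Rightarrow> 'a) set" where
  "puncture R C = (\<lambda>c i. if i \<in> R then 0 else c i) ` C"

definition IC :: "'i set \<Rightarrow> ('i \<Rightarrow> 's) set \<Rightarrow> ('s \<times> 'i \<Rightarrow> 'b::field) set" where
  "IC J C = {u. (\<forall>x. snd x \<notin> J \<longrightarrow> u x = 0) \<and>
                (\<forall>c\<in>C. (\<Sum>i\<in>J. u (c i, i)) = 0)}"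

definition ext0 :: "'i set \<Rightarrow> ('s \<times> 'i \<Rightarrow> 'b::zero) \<Rightarrow> ('s \<times> 'i \<Rightarrow> 'b)" where
  "ext0 R u = (\<lambda>x. if snd x \<in> R then 0 else u x)"

end

theory Submission
  imports Defs
begin

text \<open>Puncturing only changes coordinates in \<open>R\<close>, which the parity checks of the
  punctured code never read; dually, \<open>ext0 R\<close> only adds zeros at coordinates in \<open>R\<close>.
  So both sides impose the same checks \<open>\<Sum>i\<in>J - R. u (c i, i) = 0\<close>, \<open>c \<in> C\<close>.\<close>

lemma sum_ext0:
  assumes "finite J"
  shows "(\<Sum>i\<in>J. ext0 R u (c i, i)) = (\<Sum>i\<in>J - R. u (c i, i))"
proof -
  have "(\<Sum>i\<in>J. ext0 R u (c i, i)) = (\<Sum>i\<in>J - R. ext0 R u (c i, i))"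
    using assms by (intro sum.mono_neutral_right) (auto simp: ext0_def)
  also have "\<dots> = (\<Sum>i\<in>J - R. u (c i, i))"
    by (intro sum.cong) (auto simp: ext0_def)
  finally show ?thesis .
qed

lemma sum_punctured_word:
  "(\<Sum>i\<in>J - R. u (if i \<in> R then 0 else c i, i)) = (\<Sum>i\<in>J - R. u (c i, i))"
  by (intro sum.cong) auto

lemma IC_puncture_eq_shortening:
  fixes C :: "('i \<Rightarrow> 'a::zero) set"
  assumes "finite J"
  shows "(IC (J - R) (puncture R C) :: ('a \<times> 'i \<Rightarrow> 'b::field) set)
       = {u. (\<forall>x. snd x \<notin> J - R \<longrightarrow> u x = 0) \<and> ext0 R u \<in> IC J C}"
proof -
  have checks: "(\<forall>c\<in>puncture R C. (\<Sum>i\<in>J - R. u (c i, i)) = 0)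
      \<longleftrightarrow> (\<forall>c\<in>C. (\<Sum>i\<in>J. ext0 R u (c i, i)) = 0)" for u :: "'a \<times> 'i \<Rightarrow> 'b"
    by (simp add: puncture_def sum_punctured_word sum_ext0[OF assms])
  show ?thesis
    unfolding IC_def using checks by (auto simp: ext0_def)
qed

theorem mainTheorem12:
  fixes C0 :: "(nat \<Rightarrow> 'a::{finite,field}) set"
    and R :: "nat set" and l r :: nat
  assumes "linear_code {1..l} C0"
    and "R \<subseteq> {1..l}" and "card R = r"
  shows "(IC ({1..l} - R) (puncture R C0) :: ('a \<times> nat \<Rightarrow> 'b::{finite,field}) set)
       = {cb. (\<forall>x. snd x \<notin> {1..l} - R \<longrightarrow> cb x = 0) \<and>
              ext0 R cb \<in> IC {1..l} C0}"
  by (rule IC_puncture_eq_shortening) simp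

end
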